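(* Let $\phi_1,\phi_2$ be $^*$-endomorphisms of $\mathcal{Q}_2$ with $\phi_2$ a $^*$-automorphism, and suppose $\phi_1|_{\mathcal{B}_2}=\phi_2|_{\mathcal{B}_2}$. Then there exists $t\in\mathbb{T}$ such that $\phi_1=\phi_2\circ\alpha_t$.
   Context: $\mathcal{Q}_2$ is the universal unital $C^*$-algebra generated by a unitary $u$ and an isometry $s_2$ with $s_2u=u^2s_2$, $s_2s_2^*+us_2s_2^*u^*=1$. The gauge action $\alpha:\mathbb{T}\curvearrowright\mathcal{Q}_2$ is given by $\alpha_t(u)=u$, $\alpha_t(s_2)=ts_2$. $\mathcal{B}_2:=\overline{\operatorname{span}}\{u^ms_2^ns_2^{*n}u^k:m,k\in\mathbb{Z},n\ge0\}$ (the fixed-point algebra of $\alpha$). *)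

theory Defs
  imports "HOL-Analysis.Analysis"
begin

class cstar_algebra = real_normed_algebra_1 + banach +
  fixes cscale :: "complex \<Rightarrow> 'a \<Rightarrow> 'a"
    and adj :: "'a \<Rightarrow> 'a"
  assumes cscale_add_left: "cscale (a + b) x = cscale a x + cscale b x"
    and cscale_add_right: "cscale a (x + y) = cscale a x + cscale a y"
    and cscale_cscale: "cscale a (cscale b x) = cscale (a * b) x"
    and cscale_of_real: "cscale (of_real r) x = scaleR r x"
    and cscale_mult_left: "cscale a x * y = cscale a (x * y)"
    and cscale_mult_right: "x * cscale a y = cscale a (x * y)"
    and norm_cscale: "norm (cscale a x) = cmod a * norm x"
    and adj_adj: "adj (adj x) = x"
    and adj_add: "adj (x + y) = adj x + adj y"
    and adj_mult: "adj (x * y) = adj y * adj x"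
    and adj_cscale: "adj (cscale a x) = cscale (cnj a) (adj x)"
    and cstar_identity: "norm (adj x * x) = (norm x)\<^sup>2"

definition closed_star_subalgebra :: "'a::cstar_algebra set \<Rightarrow> bool" where
  "closed_star_subalgebra S \<longleftrightarrow> closed S \<and> 1 \<in> S \<and>
     (\<forall>x\<in>S. \<forall>y\<in>S. x + y \<in> S \<and> x * y \<in> S) \<and>
     (\<forall>x\<in>S. \<forall>c. cscale c x \<in> S) \<and> (\<forall>x\<in>S. adj x \<in> S)"

definition generates :: "'a::cstar_algebra set \<Rightarrow> bool" where
  "generates G \<longleftrightarrow> (\<forall>S. closed_star_subalgebra S \<and> G \<subseteq> S \<longrightarrow> S = UNIV)"

definition cspan :: "'a::cstar_algebra set \<Rightarrow> 'a set" where
  "cspan S = {(\<Sum>x\<in>F. cscale (c x) x) | F c. finite F \<and> F \<subseteq> S}"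

definition closed_cspan :: "'a::cstar_algebra set \<Rightarrow> 'a set" where
  "closed_cspan S = closure (cspan S)"

definition star_hom :: "('a::cstar_algebra \<Rightarrow> 'a) \<Rightarrow> bool" where
  "star_hom f \<longleftrightarrow> (\<forall>x y. f (x + y) = f x + f y) \<and>
     (\<forall>c x. f (cscale c x) = cscale c (f x)) \<and>
     (\<forall>x y. f (x * y) = f x * f y) \<and> (\<forall>x. f (adj x) = adj (f x))"

definition star_aut :: "('a::cstar_algebra \<Rightarrow> 'a) \<Rightarrow> bool" where
  "star_aut f \<longleftrightarrow> star_hom f \<and> bij f"

definition upow :: "'a::cstar_algebra \<Rightarrow> int \<Rightarrow> 'a" where
  "upow u m = (if 0 \<le> m then u ^ nat m else adj u ^ nat (- m))"

definition Q2_relations :: "'a::cstar_algebra \<Rightarrow> 'a \<Rightarrow> bool" where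
  "Q2_relations u s2 \<longleftrightarrow>
     adj u * u = 1 \<and> u * adj u = 1 \<and> adj s2 * s2 = 1 \<and>
     s2 * u = u ^ 2 * s2 \<and>
     s2 * adj s2 + u * s2 * adj s2 * adj u = 1"

definition B2 :: "'a::cstar_algebra \<Rightarrow> 'a \<Rightarrow> 'a set" where
  "B2 u s2 = closed_cspan
     {upow u m * s2 ^ n * adj s2 ^ n * upow u k | m k n. True}"

text \<open>The gauge automorphism alpha_t: the *-endomorphism fixing u and sending
s2 to t s2 (determined uniquely on a generated algebra).\<close>

definition is_gauge :: "'a::cstar_algebra \<Rightarrow> 'a \<Rightarrow> complex \<Rightarrow> ('a \<Rightarrow> 'a) \<Rightarrow> bool" where
  "is_gauge u s2 t g \<longleftrightarrow> star_hom g \<and> g u = u \<and> g s2 = cscale t s2"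

end

theory Submission
  imports Defs
begin

(*
  Let alpha = inv phi2 o phi1. It is a *-endomorphism fixing B2 pointwise, so x = s2* alpha(s2)
  is an isometry with alpha(s2) = s2 x; as alpha fixes both y and s2 y s2* for y in B2, x commutes
  with u and with all projections Q n j = u^j s2^n s2*^n u^-j. Such an x is a scalar. Indeed, the
  maps expect n (compress by the 2^n orthogonal projections Q n j, then average the conjugations
  by u^i, i < 2^n) are contractions fixing x, and on every word u^m s2^a s2*^b u^k they converge
  to a scalar: diagonal words give eventually constant sequences, while an off-diagonal word is
  compressed into a single block, which the averaging spreads over 2^n orthogonal blocks, so that
  the C*-identity bounds the norm by 2^(-n/2). As the words span a dense *-subalgebra, x = c 1
  with |c| = 1, and alpha is the gauge automorphism for c.
*)

section \<open>Elementary C*-algebra facts\<close>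

lemma adj_one [simp]: "adj (1::'a::cstar_algebra) = 1"
  by (metis adj_mult adj_adj mult_1_right)

lemma adj_power: "adj (x ^ n) = adj (x::'a::cstar_algebra) ^ n"
  by (induction n) (auto simp: adj_mult power_commutes)

lemma norm_adj [simp]: "norm (adj x) = norm (x::'a::cstar_algebra)"
proof -
  have le: "norm (adj y) \<le> norm y" for y :: 'a
  proof -
    have "norm (adj y) * norm (adj y) = norm (adj (adj y) * adj y)"
      by (simp add: cstar_identity power2_eq_square)
    also have "\<dots> \<le> norm y * norm (adj y)"
      by (simp add: adj_adj norm_mult_ineq)
    finally show ?thesis
      by (cases "adj y = 0") simp_all
  qed
  show ?thesis
    using le[of x] le[of "adj x"] by (simp add: adj_adj)
qed

lemma bounded_linear_adj: "bounded_linear (adj :: 'a::cstar_algebra \<Rightarrow> 'a)"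
proof
  show "adj (r *\<^sub>R x) = r *\<^sub>R adj x" for r and x :: 'a
    by (metis adj_cscale cscale_of_real complex_cnj_complex_of_real)
qed (auto simp: adj_add intro: exI[of _ 1])

lemma bounded_linear_cscale: "bounded_linear (cscale c :: 'a::cstar_algebra \<Rightarrow> 'a)"
proof
  show "cscale c (r *\<^sub>R x) = r *\<^sub>R cscale c x" for r and x :: 'a
    by (metis cscale_cscale cscale_of_real mult.commute)
  show "\<exists>K. \<forall>x::'a. norm (cscale c x) \<le> norm x * K"
    by (auto simp: norm_cscale intro: exI[of _ "cmod c"])
qed (rule cscale_add_right)

lemma bounded_linear_cscale_left: "bounded_linear (\<lambda>c. cscale c (x::'a::cstar_algebra))"
proof
  show "cscale (r *\<^sub>R c) x = r *\<^sub>R cscale c x" for r c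
    by (metis cscale_cscale cscale_of_real scaleR_conv_of_real)
  show "\<exists>K. \<forall>c. norm (cscale c x) \<le> norm c * K"
    by (auto simp: norm_cscale intro: exI[of _ "norm x"])
qed (rule cscale_add_left)

lemmas linear_adj = bounded_linear.linear[OF bounded_linear_adj]
lemmas linear_cscale = bounded_linear.linear[OF bounded_linear_cscale]
lemmas linear_cscale_left = bounded_linear.linear[OF bounded_linear_cscale_left]

lemmas adj_zero [simp] = linear_0[OF linear_adj]
lemmas cscale_zero_left [simp] = linear_0[OF linear_cscale_left]
lemmas adj_diff = linear_diff[OF linear_adj]
lemmas adj_sum = linear_sum[OF linear_adj]
lemmas adj_scaleR = linear_scale[OF linear_adj]
lemmas cscale_sum_right = linear_sum[OF linear_cscale]
lemmas cscale_scaleR = linear_scale[OF linear_cscale]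
lemmas cscale_sum_left = linear_sum[OF linear_cscale_left]

lemma closed_range_cscale_one: "closed (range (\<lambda>c. cscale c (1::'a::cstar_algebra)))"
proof -
  have "complete (range (\<lambda>c. cscale c (1::'a)))"
    by (rule complete_isometric_image[of 1])
       (auto simp: bounded_linear_cscale_left norm_cscale complete_UNIV)
  then show ?thesis
    by (simp add: complete_eq_closed)
qed

lemma norm_le_one_if_isometry: "adj v * v = 1 \<Longrightarrow> norm (v::'a::cstar_algebra) \<le> 1"
  by (metis cstar_identity norm_one norm_ge_zero power_one abs_le_square_iff abs_of_nonneg order_refl)

lemma norm_le_one_if_projection:
  assumes "adj q = q" "q * q = (q::'a::cstar_algebra)"
  shows "norm q \<le> 1"
proof -
  have "norm q * norm q = norm q"
    using cstar_identity[of q] assms by (simp add: power2_eq_square)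
  then show ?thesis
    by (metis mult_cancel_right1 order.refl zero_le_one)
qed

lemma norm_mult_le_one:
  "norm x \<le> 1 \<Longrightarrow> norm y \<le> 1 \<Longrightarrow> norm (x * y :: 'a::real_normed_algebra) \<le> 1"
  by (metis mult_le_one norm_ge_zero norm_mult_ineq order_trans)

lemma norm_mult3_le:
  assumes "norm v \<le> 1" "norm w \<le> 1"
  shows "norm (v * x * w :: 'a::real_normed_algebra) \<le> norm x"
proof -
  have "norm (v * x * w) \<le> norm v * norm x * norm w"
    by (metis norm_mult_ineq mult_right_mono norm_ge_zero order_trans)
  also have "\<dots> \<le> 1 * norm x * 1"
    using assms by (intro mult_mono) auto
  finally show ?thesis
    by simp
qed

lemma cmod_eq_one_if_unitary_scalar:
  assumes "adj (cscale c 1) * cscale c (1::'a::cstar_algebra) = 1"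
  shows "cmod c = 1"
proof -
  have "cscale (c * cnj c) (1::'a) = 1"
    using assms by (simp add: adj_cscale cscale_mult_left cscale_mult_right cscale_cscale)
  then have "(cmod c)\<^sup>2 = 1"
    using norm_cscale[of "c * cnj c" "1::'a"] by (simp add: norm_mult power2_eq_square)
  then show ?thesis
    using norm_ge_zero[of c] by (auto simp: power2_eq_1_iff)
qed

lemma star_hom_comp: "star_hom f \<Longrightarrow> star_hom g \<Longrightarrow> star_hom (f \<circ> g)"
  unfolding star_hom_def by simp

lemma star_hom_inv:
  assumes hom: "star_hom f" and "bij f"
  shows "star_hom (inv f)"
proof -
  have f_inv: "\<And>y. f (inv f y) = y"
    using assms(2) by (simp add: bij_is_surj surj_f_inv_f)
  have inj: "\<And>x y. f x = f y \<Longrightarrow> x = y"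
    using assms(2) by (metis bij_is_inj injD)
  show ?thesis
    unfolding star_hom_def
  proof (intro conjI allI)
    show "inv f (x + y) = inv f x + inv f y" for x y
      by (rule inj) (metis f_inv hom star_hom_def)
    show "inv f (cscale c x) = cscale c (inv f x)" for c x
      by (rule inj) (metis f_inv hom star_hom_def)
    show "inv f (x * y) = inv f x * inv f y" for x y
      by (rule inj) (metis f_inv hom star_hom_def)
    show "inv f (adj x) = adj (inv f x)" for x
      by (rule inj) (metis f_inv hom star_hom_def)
  qed
qed

section \<open>Complex linear spans\<close>

lemma cspanI: "finite F \<Longrightarrow> F \<subseteq> S \<Longrightarrow> (\<Sum>v\<in>F. cscale (c v) v) \<in> cspan S"
  unfolding cspan_def by blast

lemma cspanE:
  assumes "x \<in> cspan S"
  obtains F c where "finite F" "F \<subseteq> S" "x = (\<Sum>v\<in>F. cscale (c v) v)"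
  using assms unfolding cspan_def by blast

lemma cspan_zero: "0 \<in> cspan S"
  using cspanI[of "{}" S] by simp

lemma cspan_superset: "x \<in> S \<Longrightarrow> x \<in> cspan S"
  using cspanI[of "{x}" S "\<lambda>_. 1"] by (simp add: cscale_of_real[of 1, simplified])

lemma cspan_add:
  assumes "x \<in> cspan S" "y \<in> cspan S"
  shows "x + y \<in> cspan S"
proof -
  obtain F c where F: "finite F" "F \<subseteq> S" "x = (\<Sum>v\<in>F. cscale (c v) v)"
    using assms(1) by (rule cspanE)
  obtain G d where G: "finite G" "G \<subseteq> S" "y = (\<Sum>v\<in>G. cscale (d v) v)"
    using assms(2) by (rule cspanE)
  define c' where "c' v = (if v \<in> F then c v else 0)" for v
  define d' where "d' v = (if v \<in> G then d v else 0)" for v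
  have "x = (\<Sum>v\<in>F \<union> G. cscale (c' v) v)"
    unfolding F(3) c'_def using F G by (intro sum.mono_neutral_cong_left) auto
  moreover have "y = (\<Sum>v\<in>F \<union> G. cscale (d' v) v)"
    unfolding G(3) d'_def using F G by (intro sum.mono_neutral_cong_left) auto
  ultimately have "x + y = (\<Sum>v\<in>F \<union> G. cscale (c' v + d' v) v)"
    by (simp add: cscale_add_left sum.distrib)
  then show ?thesis
    using F G cspanI[of "F \<union> G" S] by simp
qed

lemma cspan_cscale:
  assumes "x \<in> cspan S"
  shows "cscale a x \<in> cspan S"
proof -
  obtain F c where F: "finite F" "F \<subseteq> S" "x = (\<Sum>v\<in>F. cscale (c v) v)"
    using assms by (rule cspanE)
  then have "cscale a x = (\<Sum>v\<in>F. cscale (a * c v) v)"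
    by (simp add: cscale_sum_right cscale_cscale)
  then show ?thesis
    using F cspanI[of F S] by simp
qed

lemma cspan_sum: "(\<And>i. i \<in> A \<Longrightarrow> f i \<in> cspan S) \<Longrightarrow> sum f A \<in> cspan S"
  by (induction A rule: infinite_finite_induct) (auto intro: cspan_zero cspan_add)

lemma cspan_mult:
  assumes S: "\<And>v w. v \<in> S \<Longrightarrow> w \<in> S \<Longrightarrow> v * w \<in> cspan S"
    and "x \<in> cspan S" "y \<in> cspan S"
  shows "x * y \<in> cspan S"
proof -
  obtain F c where F: "finite F" "F \<subseteq> S" "x = (\<Sum>v\<in>F. cscale (c v) v)"
    using assms(2) by (rule cspanE)
  obtain G d where G: "finite G" "G \<subseteq> S" "y = (\<Sum>v\<in>G. cscale (d v) v)"
    using assms(3) by (rule cspanE)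
  have "x * y = (\<Sum>v\<in>F. \<Sum>w\<in>G. cscale (c v * d w) (v * w))"
    unfolding F(3) G(3) sum_distrib_right sum_distrib_left
    by (subst sum.swap) (simp add: cscale_mult_left cscale_mult_right cscale_cscale mult.commute)
  also have "\<dots> \<in> cspan S"
    using F G S by (intro cspan_sum cspan_cscale) auto
  finally show ?thesis .
qed

lemma cspan_adj:
  assumes S: "\<And>v. v \<in> S \<Longrightarrow> adj v \<in> S" and "x \<in> cspan S"
  shows "adj x \<in> cspan S"
proof -
  obtain F c where F: "finite F" "F \<subseteq> S" "x = (\<Sum>v\<in>F. cscale (c v) v)"
    using assms(2) by (rule cspanE)
  then have "adj x = (\<Sum>v\<in>F. cscale (cnj (c v)) (adj v))"
    by (simp add: adj_sum adj_cscale)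
  also have "\<dots> \<in> cspan S"
    using F S by (intro cspan_sum cspan_cscale cspan_superset) auto
  finally show ?thesis .
qed

lemma closure_closed_under_continuous_op:
  fixes f :: "'a::first_countable_topology \<Rightarrow> 'a \<Rightarrow> 'a"
  assumes "\<And>x y. x \<in> A \<Longrightarrow> y \<in> A \<Longrightarrow> f x y \<in> A"
    and "\<And>X Y x y. X \<longlonglongrightarrow> x \<Longrightarrow> Y \<longlonglongrightarrow> y \<Longrightarrow> (\<lambda>n. f (X n) (Y n)) \<longlonglongrightarrow> f x y"
    and "x \<in> closure A" "y \<in> closure A"
  shows "f x y \<in> closure A"
proof -
  obtain X Y where X: "\<forall>n. X n \<in> A" "X \<longlonglongrightarrow> x" and Y: "\<forall>n. Y n \<in> A" "Y \<longlonglongrightarrow> y"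
    using assms(3,4) by (meson closure_sequential)
  have "\<forall>n. f (X n) (Y n) \<in> A"
    using X(1) Y(1) assms(1) by blast
  moreover have "(\<lambda>n. f (X n) (Y n)) \<longlonglongrightarrow> f x y"
    using X(2) Y(2) by (rule assms(2))
  ultimately show ?thesis
    by (meson closure_sequential)
qed

lemma closed_star_subalgebra_closure_cspan:
  assumes "1 \<in> cspan S"
    and "\<And>v w. v \<in> S \<Longrightarrow> w \<in> S \<Longrightarrow> v * w \<in> cspan S"
    and "\<And>v. v \<in> S \<Longrightarrow> adj v \<in> S"
  shows "closed_star_subalgebra (closure (cspan S))"
  unfolding closed_star_subalgebra_def
proof (intro conjI ballI allI)
  show "1 \<in> closure (cspan S)"
    using assms(1) closure_subset by blast
  fix x y c
  assume x: "x \<in> closure (cspan S)" and y: "y \<in> closure (cspan S)"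
  show "x + y \<in> closure (cspan S)"
    by (rule closure_closed_under_continuous_op[OF cspan_add tendsto_add x y])
  show "x * y \<in> closure (cspan S)"
    by (rule closure_closed_under_continuous_op[OF cspan_mult[OF assms(2)] tendsto_mult x y])
  show "cscale c x \<in> closure (cspan S)"
    by (rule closure_closed_under_continuous_op[where f = "\<lambda>x _. cscale c x", OF cspan_cscale
          bounded_linear.tendsto[OF bounded_linear_cscale] x y])
  show "adj x \<in> closure (cspan S)"
    by (rule closure_closed_under_continuous_op[where f = "\<lambda>x _. adj x", OF cspan_adj[OF assms(3)]
          bounded_linear.tendsto[OF bounded_linear_adj] x y])
qed simp

section \<open>Pinchings and orthogonal sums\<close>

lemma norm_pinch_le:
  fixes q z :: "'a::cstar_algebra"
  assumes "adj q = q" "q * q = q"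
  shows "norm (q * z * q + (1 - q) * z * (1 - q)) \<le> norm z"
proof -
  define v where "v = 1 - (q + q)"
  have "adj v * v = 1"
    using assms by (simp add: v_def adj_diff adj_add algebra_simps)
  then have "norm v \<le> 1"
    by (rule norm_le_one_if_isometry)
  then have "norm (v * z * v) \<le> norm z"
    using norm_mult3_le by blast
  moreover have "2 *\<^sub>R (q * z * q + (1 - q) * z * (1 - q)) = z + v * z * v"
    using assms(2) by (simp add: v_def scaleR_2 algebra_simps)
  ultimately have "2 * norm (q * z * q + (1 - q) * z * (1 - q)) \<le> norm z + norm z"
    by (metis norm_scaleR abs_numeral norm_triangle_le add_left_mono)
  then show ?thesis
    by simp
qed

lemma norm_pinch_family_le:
  fixes P :: "'i \<Rightarrow> 'a::cstar_algebra"
  assumes "finite J"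
    and proj: "\<And>i. i \<in> J \<Longrightarrow> adj (P i) = P i \<and> P i * P i = P i"
    and orth: "\<And>i j. i \<in> J \<Longrightarrow> j \<in> J \<Longrightarrow> i \<noteq> j \<Longrightarrow> P i * P j = 0"
  shows "norm ((\<Sum>i\<in>J. P i * z * P i) + (1 - sum P J) * z * (1 - sum P J)) \<le> norm z"
  using assms
proof (induction J rule: finite_induct)
  case (insert i J)
  \<comment> \<open>The pinching by the enlarged family is the pinching by \<open>P i\<close> of the previous one.\<close>
  define q where "q = P i"
  define A where "A = (\<Sum>j\<in>J. P j * z * P j)"
  define R where "R = sum P J"
  define y where "y = A + (1 - R) * z * (1 - R)"
  have qPj: "q * P j = 0" and Pjq: "P j * q = 0" if "j \<in> J" for j
    using insert.prems(2) insert.hyps(2) that by (auto simp: q_def)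
  have qA: "q * A = 0" and Aq: "A * q = 0" and qR: "q * R = 0" and Rq: "R * q = 0"
    unfolding A_def R_def sum_distrib_left sum_distrib_right
    by (simp_all add: qPj Pjq mult.assoc flip: mult.assoc[of q])
  have zero_assoc: "q * (A * x) = 0" "A * (q * x) = 0" "q * (R * x) = 0" "R * (q * x) = 0" for x
    by (simp_all add: qA Aq qR Rq flip: mult.assoc)
  have "q * y * q = q * z * q"
    using qA qR Rq by (simp add: y_def algebra_simps zero_assoc)
  moreover have "(1 - q) * y * (1 - q) = A + (1 - (q + R)) * z * (1 - (q + R))"
    using qA Aq qR Rq by (simp add: y_def algebra_simps zero_assoc)
  ultimately have "(\<Sum>j\<in>insert i J. P j * z * P j)
      + (1 - sum P (insert i J)) * z * (1 - sum P (insert i J))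
      = q * y * q + (1 - q) * y * (1 - q)"
    using insert.hyps by (simp add: q_def A_def R_def add.assoc)
  also have "norm \<dots> \<le> norm y"
    using insert.prems(1) by (intro norm_pinch_le) (simp_all add: q_def)
  also have "norm y \<le> norm z"
    unfolding y_def A_def R_def using insert.prems by (intro insert.IH) auto
  finally show ?case .
qed simp

lemma norm_sum_orthogonal:
  fixes e :: "'i \<Rightarrow> 'a::cstar_algebra"
  assumes "finite I" "\<And>i j. i \<in> I \<Longrightarrow> j \<in> I \<Longrightarrow> i \<noteq> j \<Longrightarrow> adj (e i) * e j = 0"
  shows "(norm (sum e I))\<^sup>2 \<le> (\<Sum>i\<in>I. (norm (e i))\<^sup>2)"
proof -
  have "adj (sum e I) * sum e I = (\<Sum>i\<in>I. \<Sum>j\<in>I. adj (e i) * e j)"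
    by (simp add: adj_sum sum_distrib_left sum_distrib_right) (rule sum.swap)
  also have "\<dots> = (\<Sum>i\<in>I. adj (e i) * e i)"
  proof (rule sum.cong)
    fix i assume "i \<in> I"
    then show "(\<Sum>j\<in>I. adj (e i) * e j) = adj (e i) * e i"
      using assms by (subst sum.remove[of I i]) (auto intro: sum.neutral)
  qed simp
  finally have "(norm (sum e I))\<^sup>2 = norm (\<Sum>i\<in>I. adj (e i) * e i)"
    by (simp flip: cstar_identity)
  also have "\<dots> \<le> (\<Sum>i\<in>I. (norm (e i))\<^sup>2)"
    by (rule order_trans[OF norm_sum]) (simp add: cstar_identity)
  finally show ?thesis .
qed

section \<open>Dyadic arithmetic\<close>

lemma dvd_diff_imp_eq_nat:
  fixes i j N :: nat
  assumes "i < N" "j < N" "int N dvd int j - int i"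
  shows "i = j"
proof -
  have "int j mod int N = int i mod int N"
    using assms(3) by (simp add: mod_eq_dvd_iff)
  then show ?thesis
    using assms(1,2) by (simp flip: of_nat_mod)
qed

(* Fixed points mod 2^n of the map j |-> m + 2^(a-b) (j + k); its slope minus one is odd. *)
lemma dyadic_fixed_point_unique:
  fixes i i' a b n :: nat and m k :: int
  defines "t \<equiv> \<lambda>j::int. m + 2 ^ a * ((j + k) div 2 ^ b)"
  assumes "b < a" "i < 2 ^ n" "i' < 2 ^ n"
    and "2 ^ b dvd (int i + k)" "2 ^ n dvd (t (int i) - int i)"
    and "2 ^ b dvd (int i' + k)" "2 ^ n dvd (t (int i') - int i')"
  shows "i = i'"
proof -
  obtain c where c: "a = b + c" "0 < c"
    using assms(2) by (metis less_imp_add_positive)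
  obtain p p' where p: "int i + k = 2 ^ b * p" and p': "int i' + k = 2 ^ b * p'"
    using assms(5,7) by (metis dvdE)
  have tp: "t (int i) = m + 2 ^ c * (2 ^ b * p)" and tp': "t (int i') = m + 2 ^ c * (2 ^ b * p')"
    using p p' by (simp_all add: t_def c power_add mult_ac)
  have "(t (int i) - int i) - (t (int i') - int i') = (2 ^ c - 1) * (int i - int i')"
    unfolding tp tp' p[symmetric] p'[symmetric] by (simp add: algebra_simps)
  moreover have "2 ^ n dvd (t (int i) - int i) - (t (int i') - int i')"
    using assms(6,8) by (rule dvd_diff)
  ultimately have "(2::int) ^ n dvd (2 ^ c - 1) * (int i - int i')"
    by simp
  moreover have "coprime ((2::int) ^ n) (2 ^ c - 1)"
    using c(2) by simp
  ultimately have "int (2 ^ n) dvd int i - int i'"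
    using coprime_dvd_mult_right_iff by fastforce
  then show ?thesis
    using assms(3,4) dvd_diff_imp_eq_nat by metis
qed

lemma sum_lessThan_add: "sum f {..<n + m} = sum f {..<n} + (\<Sum>i<m. f (n + i))"
  for f :: "nat \<Rightarrow> 'b::comm_monoid_add"
  by (induction m) (simp_all add: add.assoc)

section \<open>Computations in \<open>\<Q>\<^sub>2\<close>\<close>

locale q2 =
  fixes u s :: "'a::cstar_algebra"
  assumes relations: "Q2_relations u s"
begin

lemma adj_u_u: "adj u * u = 1"
  and u_adj_u: "u * adj u = 1"
  and adj_s_s: "adj s * s = 1"
  and s_u: "s * u = u ^ 2 * s"
  and cuntz_relation: "s * adj s + u * s * adj s * adj u = 1"
  using relations by (auto simp: Q2_relations_def)

definition U :: "int \<Rightarrow> 'a" where "U m = upow u m"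
definition S :: "nat \<Rightarrow> 'a" where "S n = s ^ n"
definition Sa :: "nat \<Rightarrow> 'a" where "Sa n = adj s ^ n"
definition Q :: "nat \<Rightarrow> int \<Rightarrow> 'a" where "Q n j = U j * S n * Sa n * U (- j)"
definition W :: "int \<Rightarrow> nat \<Rightarrow> nat \<Rightarrow> int \<Rightarrow> 'a" where "W m a b k = U m * S a * Sa b * U k"

lemma U_0 [simp]: "U 0 = 1"
  by (simp add: U_def upow_def)

lemma U_1: "U 1 = u"
  by (simp add: U_def upow_def)

lemma U_minus_1: "U (- 1) = adj u"
  by (simp add: U_def upow_def)

lemma U_Suc: "U (m + 1) = U m * u"
proof (cases "m \<ge> 0")
  case True
  then show ?thesis
    by (simp add: U_def upow_def nat_add_distrib power_Suc2 power_commutes)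
next
  case False
  then obtain p where p: "m = - int (Suc p)"
    by (metis int_cases of_nat_0_le_iff)
  then have "nat (- m) = Suc p" "nat (- (m + 1)) = p"
    by simp_all
  then have "U m = adj u ^ p * adj u" "U (m + 1) = adj u ^ p"
    using False p by (simp_all add: U_def upow_def power_Suc2 del: power_Suc)
  then show ?thesis
    by (simp add: mult.assoc adj_u_u)
qed

lemma U_pred: "U (m - 1) = U m * adj u"
  using U_Suc[of "m - 1"] by (simp add: mult.assoc u_adj_u)

lemma U_add: "U (m + k) = U m * U k"
proof (induction k rule: int_induct[where k = 0])
  case (step1 i)
  then show ?case
    using U_Suc[of "m + i"] U_Suc[of i] by (simp add: add.assoc mult.assoc)
next
  case (step2 i)
  then show ?case
    using U_pred[of "m + i"] U_pred[of i] by (simp add: algebra_simps)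
qed simp

lemma U_mult_U_mult: "U m * (U k * x) = U (m + k) * x"
  by (simp add: U_add mult.assoc)

lemma U_mult_U_minus: "U m * U (- m) = 1"
  and U_minus_mult_U: "U (- m) * U m = 1"
  by (simp_all flip: U_add)

lemma adj_U: "adj (U m) = U (- m)"
  by (cases "m \<ge> 0") (auto simp: U_def upow_def adj_power adj_adj)

lemma norm_U: "norm (U m) \<le> 1"
  by (rule norm_le_one_if_isometry) (simp add: adj_U U_minus_mult_U)

lemma s_mult_U: "s * U m = U (2 * m) * s"
proof -
  have U_2: "U 2 = u * u"
    using U_add[of 1 1] by (simp add: U_1)
  have s_U_1: "s * U 1 = U 2 * s"
    using s_u by (simp add: U_1 U_2 power2_eq_square)
  have s_U_minus_1: "s * U (- 1) = U (- 2) * s"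
  proof -
    have "s * U (- 1) = U (- 2) * (U 2 * s) * U (- 1)"
      by (simp add: U_minus_mult_U flip: mult.assoc)
    also have "\<dots> = U (- 2) * (s * U 1) * U (- 1)"
      by (simp only: s_U_1)
    finally show ?thesis
      by (simp add: mult.assoc U_mult_U_minus)
  qed
  show ?thesis
  proof (induction m rule: int_induct[where k = 0])
    case (step1 i)
    have "s * U (i + 1) = s * U i * U 1"
      by (simp add: U_add mult.assoc)
    also have "\<dots> = U (2 * i) * U 2 * s"
      by (simp add: step1 s_U_1 mult.assoc)
    finally show ?case
      by (simp add: distrib_left U_add)
  next
    case (step2 i)
    have "s * U (i - 1) = s * U i * U (- 1)"
      by (simp add: mult.assoc flip: U_add)
    also have "\<dots> = U (2 * i) * U (- 2) * s"
      by (simp add: step2 s_U_minus_1 mult.assoc)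
    finally show ?case
      by (simp add: right_diff_distrib flip: U_add)
  qed simp
qed

lemma S_0 [simp]: "S 0 = 1" and Sa_0 [simp]: "Sa 0 = 1"
  by (simp_all add: S_def Sa_def)

lemma S_Suc: "S (Suc n) = s * S n" and S_Suc': "S (Suc n) = S n * s"
  and Sa_Suc: "Sa (Suc n) = Sa n * adj s" and Sa_Suc': "Sa (Suc n) = adj s * Sa n"
  by (simp_all add: S_def Sa_def power_Suc2 del: power_Suc) (simp_all add: power_commutes)

lemma S_add: "S (a + b) = S a * S b" and Sa_add: "Sa (a + b) = Sa a * Sa b"
  by (simp_all add: S_def Sa_def power_add)

lemma adj_S: "adj (S n) = Sa n" and adj_Sa: "adj (Sa n) = S n"
  by (simp_all add: S_def Sa_def adj_power adj_adj)

lemma Sa_mult_S: "Sa n * S n = 1"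
proof (induction n)
  case (Suc n)
  have "Sa (Suc n) * S (Suc n) = Sa n * (adj s * s) * S n"
    by (simp add: Sa_Suc S_Suc mult.assoc)
  then show ?case
    using Suc by (simp add: adj_s_s)
qed simp

lemma norm_S: "norm (S n) \<le> 1"
  by (rule norm_le_one_if_isometry) (simp add: adj_S Sa_mult_S)

lemma norm_Sa: "norm (Sa n) \<le> 1"
  using norm_S[of n] by (metis adj_S norm_adj)

lemma S_mult_U: "S n * U m = U (2 ^ n * m) * S n"
proof (induction n arbitrary: m)
  case (Suc n)
  have "S (Suc n) * U m = S n * (s * U m)"
    by (simp add: S_Suc' mult.assoc)
  also have "\<dots> = U (2 ^ n * (2 * m)) * S n * s"
    by (simp add: s_mult_U Suc flip: mult.assoc)
  finally show ?case
    by (simp add: S_Suc' mult_ac)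
qed simp

lemma U_mult_Sa: "U m * Sa n = Sa n * U (2 ^ n * m)"
  using arg_cong[OF S_mult_U[of n "- m"], of adj] by (simp add: adj_mult adj_S adj_U)

lemma adj_s_u_s: "adj s * u * s = 0"
proof -
  have cancel: "adj s * (s * x) = x" "adj u * (u * x) = x" for x
    by (simp_all add: adj_s_s adj_u_u flip: mult.assoc)
  have "adj s * u * s = adj s * (s * adj s + u * s * adj s * adj u) * u * s"
    by (simp add: cuntz_relation)
  also have "\<dots> = adj s * u * s + adj s * u * s"
    by (simp add: distrib_left distrib_right mult.assoc cancel adj_s_s)
  finally show ?thesis
    by simp
qed

lemma adj_s_U_s: "adj s * U m * s = (if even m then U (m div 2) else 0)"
proof (cases "even m")
  case True
  then obtain i where "m = 2 * i"
    by auto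
  then show ?thesis
    by (simp add: mult.assoc flip: s_mult_U) (simp add: adj_s_s flip: mult.assoc)
next
  case False
  then obtain i where i: "m = 1 + 2 * i"
    by (metis oddE add.commute)
  have "adj s * U m * s = adj s * u * s * U i"
    by (simp add: i U_add U_1 mult.assoc flip: s_mult_U)
  then show ?thesis
    using False adj_s_u_s by simp
qed

lemma Sa_U_S: "Sa n * U m * S n = (if 2 ^ n dvd m then U (m div 2 ^ n) else 0)"
proof (induction n arbitrary: m)
  case (Suc n)
  have "Sa (Suc n) * U m * S (Suc n) = Sa n * (adj s * U m * s) * S n"
    by (simp add: Sa_Suc S_Suc mult.assoc)
  also have "\<dots> = (if even m then Sa n * U (m div 2) * S n else 0)"
    by (simp add: adj_s_U_s)
  also have "\<dots> = (if 2 ^ Suc n dvd m then U (m div 2 ^ Suc n) else 0)"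
  proof (cases "even m")
    case True
    then obtain i where "m = 2 * i"
      by auto
    then show ?thesis
      using Suc by simp
  next
    case False
    then have "\<not> (2::int) ^ Suc n dvd m"
      by (metis dvd_power dvd_trans zero_less_Suc)
    then show ?thesis
      using False by simp
  qed
  finally show ?case .
qed simp

lemma Sa_U_S_le:
  assumes "b \<le> a"
  shows "Sa b * U j * S a = (if 2 ^ b dvd j then U (j div 2 ^ b) * S (a - b) else 0)"
proof -
  have "S a = S b * S (a - b)"
    using assms by (simp flip: S_add)
  then have "Sa b * U j * S a = (Sa b * U j * S b) * S (a - b)"
    by (simp add: mult.assoc)
  then show ?thesis
    by (simp add: Sa_U_S)
qed

lemma Sa_U_S_ge:
  assumes "a \<le> b"
  shows "Sa b * U j * S a = (if 2 ^ a dvd j then Sa (b - a) * U (j div 2 ^ a) else 0)"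
proof -
  have "Sa b = Sa (b - a) * Sa a"
    using assms by (simp flip: Sa_add)
  then have "Sa b * U j * S a = Sa (b - a) * (Sa a * U j * S a)"
    by (simp add: mult.assoc)
  then show ?thesis
    by (simp add: Sa_U_S)
qed

lemma adj_Q: "adj (Q n j) = Q n j"
  by (simp add: Q_def adj_mult adj_U adj_S adj_Sa mult.assoc)

lemma Q_mult_Q_add: "Q n j * Q (n + c) t = (if 2 ^ n dvd (t - j) then Q (n + c) t else 0)"
proof -
  have prod: "Q n j * Q (n + c) t
      = U j * S n * (Sa n * U (t - j) * S n) * S c * Sa (n + c) * U (- t)"
    by (simp add: Q_def S_add mult.assoc U_mult_U_mult)
  show ?thesis
  proof (cases "2 ^ n dvd (t - j)")
    case True
    have "U j * S n * U ((t - j) div 2 ^ n) = U j * U (t - j) * S n"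
      using True by (simp add: S_mult_U mult.assoc)
    also have "U j * U (t - j) = U t"
      by (simp flip: U_add)
    finally have shift: "U j * S n * U ((t - j) div 2 ^ n) = U t * S n" .
    have "Q n j * Q (n + c) t = U j * S n * U ((t - j) div 2 ^ n) * S c * Sa (n + c) * U (- t)"
      using prod True by (simp add: Sa_U_S)
    also have "\<dots> = (U j * S n * U ((t - j) div 2 ^ n)) * (S c * Sa (n + c) * U (- t))"
      by (simp only: mult.assoc)
    also have "\<dots> = Q (n + c) t"
      by (simp only: shift) (simp add: Q_def S_add mult.assoc)
    finally show ?thesis
      using True by simp
  next
    case False
    then show ?thesis
      using prod by (simp add: Sa_U_S)
  qed
qed

lemma Q_mult_Q: "Q n j * Q n t = (if 2 ^ n dvd (t - j) then Q n t else 0)"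
  using Q_mult_Q_add[of n j 0 t] by simp

lemma Q_idem: "Q n j * Q n j = Q n j"
  by (simp add: Q_mult_Q)

lemma norm_Q: "norm (Q n j) \<le> 1"
  by (rule norm_le_one_if_projection) (simp_all add: adj_Q Q_idem)

lemma U_mult_Q: "U m * Q n j = Q n (j + m) * U m"
  by (simp add: Q_def mult.assoc U_mult_U_mult add.commute flip: U_add)

lemma U_Q_U: "U m * Q n j * U (- m) = Q n (j + m)"
  by (simp add: U_mult_Q mult.assoc U_mult_U_minus)

lemma S_mult_Q: "S a * Q n j = Q (n + a) (2 ^ a * j) * S a"
proof -
  have "2 ^ a * (- j) div 2 ^ a = - j"
    by (rule nonzero_mult_div_cancel_left) simp
  then have "Sa a * U (2 ^ a * (- j)) * S a = U (- j)"
    using Sa_U_S[of a "2 ^ a * (- j)"] by (simp only: dvd_triv_left if_True)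
  then have "Sa a * U (- (2 ^ a * j)) * S a = U (- j)"
    by simp
  moreover have "S (n + a) = S a * S n"
    by (simp add: add.commute flip: S_add)
  ultimately have "Q (n + a) (2 ^ a * j) * S a = U (2 ^ a * j) * S a * S n * Sa n * U (- j)"
    by (simp add: Q_def Sa_add mult.assoc)
  then show ?thesis
    by (simp add: Q_def S_mult_U flip: mult.assoc)
qed

lemma Sa_mult_Q: "Sa b * Q (n + b) j = (if 2 ^ b dvd j then Q n (j div 2 ^ b) * Sa b else 0)"
proof (cases "2 ^ b dvd j")
  case True
  then obtain i where j: "j = 2 ^ b * i"
    by blast
  have "Sa b * Q (n + b) j = adj (S b * Q n i)"
    by (simp add: j S_mult_Q adj_mult adj_Q adj_S)
  also have "\<dots> = Q n i * Sa b"
    by (simp add: adj_mult adj_Q adj_S)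
  finally show ?thesis
    using True by (simp add: j)
next
  case False
  have "Sa b * Q (n + b) j = (Sa b * U j * S b) * S n * Sa (n + b) * U (- j)"
    by (simp add: Q_def S_add mult.assoc add.commute[of n])
  then show ?thesis
    using False by (simp add: Sa_U_S)
qed

lemma Q_split: "Q n j = Q (Suc n) j + Q (Suc n) (j + 2 ^ n)"
proof -
  have S_u: "S n * u = U (2 ^ n) * S n"
    using S_mult_U[of n 1] by (simp add: U_1)
  have adj_u_Sa: "adj u * Sa n = Sa n * U (- (2 ^ n))"
    using U_mult_Sa[of "- 1" n] by (simp add: U_minus_1)
  have "Q n j = U j * S n * (s * adj s + u * s * adj s * adj u) * Sa n * U (- j)"
    by (simp add: Q_def cuntz_relation)
  also have "\<dots> = U j * (S n * s) * (adj s * Sa n) * U (- j)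
      + U j * (S n * u) * s * adj s * (adj u * Sa n) * U (- j)"
    by (simp add: distrib_left distrib_right mult.assoc)
  also have "\<dots> = Q (Suc n) j + Q (Suc n) (j + 2 ^ n)"
    by (simp add: S_u adj_u_Sa Q_def S_Suc' Sa_Suc' mult.assoc U_mult_U_mult add.commute flip: U_add)
  finally show ?thesis .
qed

lemma sum_Q: "(\<Sum>i<2 ^ n. Q n (int i)) = 1"
proof (induction n)
  case (Suc n)
  have "(\<Sum>i<2 ^ Suc n. Q (Suc n) (int i))
      = (\<Sum>i<2 ^ n. Q (Suc n) (int i)) + (\<Sum>i<2 ^ n. Q (Suc n) (int i + 2 ^ n))"
    using sum_lessThan_add[of "\<lambda>i. Q (Suc n) (int i)" "2 ^ n" "2 ^ n"] by (simp add: mult_2 add.commute)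
  also have "\<dots> = (\<Sum>i<2 ^ n. Q n (int i))"
    by (simp add: Q_split[of n] sum.distrib)
  finally show ?case
    using Suc by simp
qed (simp add: Q_def U_mult_U_minus)

lemma sum_Q_shift: "(\<Sum>i<2 ^ n. Q n (m + int i)) = 1"
proof -
  have "(\<Sum>i<2 ^ n. Q n (m + int i)) = U m * (\<Sum>i<2 ^ n. Q n (int i)) * U (- m)"
    by (simp add: sum_distrib_left sum_distrib_right U_Q_U add.commute)
  then show ?thesis
    by (simp add: sum_Q U_mult_U_minus)
qed

lemma sum_Q_multiple_periods: "(\<Sum>i<2 ^ (n + d). Q n (m + int i)) = (2 ^ d :: real) *\<^sub>R 1"
proof (induction d arbitrary: m)
  case (Suc d)
  have "(\<Sum>i<2 ^ (n + Suc d). Q n (m + int i))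
      = (\<Sum>i<2 ^ (n + d). Q n (m + int i))
        + (\<Sum>i<2 ^ (n + d). Q n ((m + 2 ^ (n + d)) + int i))"
    using sum_lessThan_add[of "\<lambda>i. Q n (m + int i)" "2 ^ (n + d)" "2 ^ (n + d)"]
    by (simp add: mult_2 add.assoc)
  then show ?case
    using Suc[of m] Suc[of "m + 2 ^ (n + d)"] by (simp add: scaleR_2 flip: scaleR_add_left)
qed (simp add: sum_Q_shift)

lemma s_Q_adj_s: "s * Q n j * adj s = Q (Suc n) (2 * j)"
proof -
  have "U (- j) * adj s = adj s * U (- (2 * j))"
    using U_mult_Sa[of "- j" 1] by (simp add: Sa_def)
  then have "s * Q n j * adj s = (s * U j) * S n * Sa n * (adj s * U (- (2 * j)))"
    by (simp add: Q_def mult.assoc)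
  also have "\<dots> = U (2 * j) * (s * S n) * (Sa n * adj s) * U (- (2 * j))"
    by (simp add: s_mult_U mult.assoc)
  finally show ?thesis
    by (simp add: Q_def S_Suc Sa_Suc)
qed

lemma W_mult_Q: "W m a b k * Q (N + b) j =
   (if 2 ^ b dvd (j + k) then Q (N + a) (m + 2 ^ a * ((j + k) div 2 ^ b)) * W m a b k else 0)"
proof -
  define d where "d = (j + k) div 2 ^ b"
  have "U m * (S a * Q N d) = U m * Q (N + a) (2 ^ a * d) * S a"
    by (simp add: S_mult_Q mult.assoc)
  also have "\<dots> = Q (N + a) (m + 2 ^ a * d) * U m * S a"
    by (simp add: U_mult_Q add.commute)
  finally have shift: "U m * (S a * Q N d) * Sa b * U k = Q (N + a) (m + 2 ^ a * d) * W m a b k"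
    by (simp add: W_def mult.assoc)
  have "W m a b k * Q (N + b) j = U m * S a * (Sa b * Q (N + b) (j + k)) * U k"
    by (simp add: W_def U_mult_Q mult.assoc)
  also have "\<dots> = (if 2 ^ b dvd (j + k) then U m * (S a * Q N d) * Sa b * U k else 0)"
    by (simp add: Sa_mult_Q d_def mult.assoc)
  finally show ?thesis
    using shift by (simp add: d_def)
qed

lemma norm_W: "norm (W m a b k) \<le> 1"
  unfolding W_def by (intro norm_mult_le_one norm_U norm_S norm_Sa)

lemma adj_W: "adj (W m a b k) = W (- k) b a (- m)"
  by (simp add: W_def adj_mult adj_U adj_S adj_Sa mult.assoc)

definition words :: "'a set" where "words = {W m a b k | m a b k. True}"

lemma W_in_words [simp]: "W m a b k \<in> words"
  unfolding words_def by blast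

lemma adj_words: "v \<in> words \<Longrightarrow> adj v \<in> words"
  unfolding words_def using adj_W by blast

lemma words_mult:
  assumes "v \<in> words" "w \<in> words"
  shows "v * w \<in> insert 0 words"
proof -
  obtain m a b k m' a' b' k' where vw: "v = W m a b k" "w = W m' a' b' k'"
    using assms unfolding words_def by blast
  define j where "j = k + m'"
  have vw_eq: "v * w = U m * S a * (Sa b * U j * S a') * Sa b' * U k'"
    by (simp add: vw W_def j_def mult.assoc U_mult_U_mult)
  show ?thesis
  proof (cases "b \<le> a'")
    case True
    define d where "d = j div 2 ^ b"
    have "U m * S a * (U d * S (a' - b)) * Sa b' * U k'
        = U m * (S a * U d) * S (a' - b) * Sa b' * U k'"
      by (simp only: mult.assoc)
    also have "\<dots> = W (m + 2 ^ a * d) (a + (a' - b)) b' k'"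
      by (simp only: S_mult_U) (simp add: W_def U_add S_add mult.assoc)
    finally show ?thesis
      using True vw_eq by (simp add: Sa_U_S_le d_def)
  next
    case False
    define d where "d = j div 2 ^ a'"
    have "U m * S a * (Sa (b - a') * U d) * Sa b' * U k'
        = U m * S a * Sa (b - a') * (U d * Sa b') * U k'"
      by (simp only: mult.assoc)
    also have "\<dots> = W m a (b - a' + b') (2 ^ b' * d + k')"
      by (simp only: U_mult_Sa) (simp add: W_def U_add Sa_add mult.assoc)
    finally show ?thesis
      using False vw_eq by (simp add: Sa_U_S_ge d_def)
  qed
qed

lemma Q_mult_Q_distinct:
  "i < 2 ^ n \<Longrightarrow> j < 2 ^ n \<Longrightarrow> i \<noteq> j \<Longrightarrow> Q n (j0 + int i) * Q n (j0 + int j) = 0"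
  using dvd_diff_imp_eq_nat[of i "2 ^ n" j] by (auto simp: Q_mult_Q)

lemma commute_U_if_commute_u:
  assumes "x * u = u * x"
  shows "x * U m = U m * x"
proof -
  have "x * adj u = adj u * x"
    using arg_cong[OF assms, of "\<lambda>y. adj u * y * adj u"]
    by (simp add: mult.assoc u_adj_u) (simp add: adj_u_u flip: mult.assoc)
  then show ?thesis
  proof (induction m rule: int_induct[where k = 0])
    case (step1 i)
    then show ?case
      by (metis U_Suc assms mult.assoc)
  next
    case (step2 i)
    then show ?case
      by (metis U_pred mult.assoc)
  qed simp
qed

section \<open>Approximate expectations onto the scalars\<close>

definition pinch :: "nat \<Rightarrow> 'a \<Rightarrow> 'a" where
  "pinch n y = (\<Sum>i<2 ^ n. Q n (int i) * y * Q n (int i))"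

definition average :: "nat \<Rightarrow> 'a \<Rightarrow> 'a" where
  "average n y = (1 / 2 ^ n) *\<^sub>R (\<Sum>i<2 ^ n. U (int i) * y * U (- int i))"

definition expect :: "nat \<Rightarrow> 'a \<Rightarrow> 'a" where
  "expect n y = average n (pinch n y)"

lemma norm_pinch: "norm (pinch n y) \<le> norm y"
  using norm_pinch_family_le[of "{..<2 ^ n}" "\<lambda>i. Q n (int i)" y]
    Q_mult_Q_distinct[of _ n _ 0]
  by (simp add: pinch_def sum_Q adj_Q Q_idem)

lemma norm_average: "norm (average n y) \<le> norm y"
proof -
  have "norm (\<Sum>i<2 ^ n. U (int i) * y * U (- int i)) \<le> (\<Sum>i<(2::nat) ^ n. norm y)"
    by (intro order_trans[OF norm_sum] sum_mono norm_mult3_le norm_U)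
  then show ?thesis
    by (simp add: average_def divide_simps mult.commute)
qed

lemma norm_expect: "norm (expect n y) \<le> norm y"
  unfolding expect_def using norm_average norm_pinch order_trans by blast

lemma expect_add: "expect n (y + z) = expect n y + expect n z"
proof -
  have "pinch n (y + z) = pinch n y + pinch n z" "average n (y + z) = average n y + average n z"
    for y z
    by (simp_all add: average_def pinch_def distrib_left distrib_right sum.distrib scaleR_add_right)
  then show ?thesis
    by (simp add: expect_def)
qed

lemma expect_cscale: "expect n (cscale c y) = cscale c (expect n y)"
proof -
  have "pinch n (cscale c y) = cscale c (pinch n y)" "average n (cscale c y) = cscale c (average n y)"
    for y
    by (simp_all add: average_def pinch_def cscale_sum_right cscale_mult_left cscale_mult_right
        cscale_scaleR)
  then show ?thesis
    by (simp add: expect_def)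
qed

lemma linear_expect: "linear (expect n)"
  by (rule linearI) (simp_all add: expect_add expect_cscale flip: cscale_of_real)

lemmas expect_diff = linear_diff[OF linear_expect]
lemmas expect_sum = linear_sum[OF linear_expect]

lemma expect_adj: "expect n (adj y) = adj (expect n y)"
  by (simp add: expect_def average_def pinch_def adj_scaleR adj_sum adj_mult adj_Q adj_U mult.assoc)

lemma expect_fixes_commutant:
  assumes "x * u = u * x" "\<And>n j. x * Q n j = Q n j * x"
  shows "expect n x = x"
proof -
  have "Q n j * x * Q n j = x * Q n j" for j
    by (metis assms(2) mult.assoc Q_idem)
  then have "pinch n x = x * (\<Sum>i<2 ^ n. Q n (int i))"
    by (simp add: pinch_def sum_distrib_left)
  moreover have "average n x = x"
  proof -
    have "U (int i) * x * U (- int i) = x" for i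
      using commute_U_if_commute_u[OF assms(1), of "- int i"] by (simp add: mult.assoc U_mult_U_mult)
    then have "average n x = (1 / 2 ^ n * real (2 ^ n)) *\<^sub>R x"
      by (simp only: average_def sum_constant_scaleR card_lessThan scaleR_scaleR)
    then show ?thesis
      by simp
  qed
  ultimately show ?thesis
    by (simp add: expect_def sum_Q)
qed

lemma dvd_if_Q_W_Q_nonzero:
  assumes "b \<le> a" "b \<le> n" "Q n i * W m a b k * Q n i \<noteq> 0"
  shows "2 ^ b dvd (i + k) \<and> 2 ^ n dvd (m + 2 ^ a * ((i + k) div 2 ^ b) - i)"
proof -
  obtain N where N: "n = N + b"
    using assms(2) by (metis le_add_diff_inverse2)
  define t where "t = m + 2 ^ a * ((i + k) div 2 ^ b)"
  have W_Q: "W m a b k * Q n i = (if 2 ^ b dvd (i + k) then Q (N + a) t * W m a b k else 0)"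
    using W_mult_Q[of m a b k N i] by (simp add: N t_def)
  have "N + a = n + (a - b)"
    using assms(1) N by simp
  then have "Q n i * Q (N + a) t = (if 2 ^ n dvd (t - i) then Q (N + a) t else 0)"
    by (simp add: Q_mult_Q_add)
  moreover have "Q n i * W m a b k * Q n i
      = (if 2 ^ b dvd (i + k) then Q n i * Q (N + a) t * W m a b k else 0)"
    by (simp add: mult.assoc W_Q)
  ultimately show ?thesis
    using assms(3) by (auto simp: t_def split: if_splits)
qed

lemma pinch_W_offdiag:
  assumes "b < a" "b \<le> n"
  obtains j0 e where "pinch n (W m a b k) = Q n j0 * e * Q n j0" "norm e \<le> 1"
proof -
  define w where "w = W m a b k"
  show ?thesis
  proof (cases "\<exists>i0<2 ^ n. Q n (int i0) * w * Q n (int i0) \<noteq> 0")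
    case True
    then obtain i0 where i0: "i0 < 2 ^ n" "Q n (int i0) * w * Q n (int i0) \<noteq> 0"
      by blast
    have "Q n (int i) * w * Q n (int i) = 0" if "i < 2 ^ n" "i \<noteq> i0" for i
      using that i0 dvd_if_Q_W_Q_nonzero[of b a n] assms
        dyadic_fixed_point_unique[of b a i n i0 k m] unfolding w_def by force
    then have "pinch n w = Q n (int i0) * w * Q n (int i0)"
      unfolding pinch_def using i0(1) by (subst sum.remove[of _ i0]) (auto intro: sum.neutral)
    then show ?thesis
      using that norm_W unfolding w_def by blast
  next
    case False
    then have "pinch n w = Q n 0 * 0 * Q n 0"
      unfolding pinch_def by (auto intro: sum.neutral)
    then show ?thesis
      using that unfolding w_def by fastforce
  qed
qed

lemma norm_expect_W_offdiag:
  assumes "b < a" "b \<le> n"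
  shows "(norm (expect n (W m a b k)))\<^sup>2 \<le> inverse (2 ^ n)"
proof -
  obtain j0 e where je: "pinch n (W m a b k) = Q n j0 * e * Q n j0" "norm e \<le> 1"
    using pinch_W_offdiag[OF assms] by blast
  \<comment> \<open>Averaging spreads the block over \<open>2 ^ n\<close> orthogonal blocks \<open>e' i\<close> of norm at most 1.\<close>
  define e' where "e' i = Q n (j0 + int i) * (U (int i) * e * U (- int i)) * Q n (j0 + int i)" for i
  have "U (int i) * (Q n j0 * e * Q n j0) * U (- int i) = e' i" for i
  proof -
    have "Q n j0 * U (- int i) = U (- int i) * Q n (j0 + int i)"
      using U_mult_Q[of "- int i" n "j0 + int i"] by simp
    then show ?thesis
      by (simp add: e'_def U_mult_Q mult.assoc flip: mult.assoc[of "U (int i)" "Q n j0"])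
  qed
  then have expect_eq: "expect n (W m a b k) = (1 / 2 ^ n) *\<^sub>R sum e' {..<2 ^ n}"
    by (simp add: expect_def average_def je)
  have "adj (e' i) * e' j = 0" if "i < 2 ^ n" "j < 2 ^ n" "i \<noteq> j" for i j
    using Q_mult_Q_distinct[OF that]
    by (simp add: e'_def adj_mult adj_Q mult.assoc
        flip: mult.assoc[of "Q n (j0 + int i)" "Q n (j0 + int j)"])
  then have "(norm (sum e' {..<2 ^ n}))\<^sup>2 \<le> (\<Sum>i<2 ^ n. (norm (e' i))\<^sup>2)"
    by (intro norm_sum_orthogonal) auto
  also have "\<dots> \<le> (\<Sum>i<(2::nat) ^ n. 1)"
    unfolding e'_def using je(2)
    by (intro sum_mono power_le_one norm_ge_zero order_trans[OF norm_mult3_le] norm_Q norm_U)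
  finally have "(norm (sum e' {..<2 ^ n}))\<^sup>2 \<le> 2 ^ n"
    by simp
  then have "(norm (sum e' {..<2 ^ n}))\<^sup>2 / (2 ^ n)\<^sup>2 \<le> 2 ^ n / (2 ^ n)\<^sup>2"
    by (rule divide_right_mono) simp
  then show ?thesis
    by (simp add: expect_eq power_divide power2_eq_square inverse_eq_divide)
qed

lemma pinch_W_diag:
  assumes "a \<le> n" "\<not> 2 ^ n dvd (m + k)"
  shows "pinch n (W m a a k) = 0"
  unfolding pinch_def
proof (rule sum.neutral, rule ballI, rule ccontr)
  fix i assume "Q n (int i) * W m a a k * Q n (int i) \<noteq> 0"
  then have "2 ^ a dvd (int i + k)" "2 ^ n dvd (m + 2 ^ a * ((int i + k) div 2 ^ a) - int i)"
    using dvd_if_Q_W_Q_nonzero[of a a n "int i" m k] assms(1) by auto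
  then show False
    using assms(2) by (simp add: add.assoc)
qed

lemma pinch_Q:
  assumes "a \<le> n"
  shows "pinch n (Q a m) = Q a m"
proof -
  obtain c where c: "n = a + c"
    using assms by (metis le_add_diff_inverse)
  have "Q n (int i) * Q a m * Q n (int i) = Q n (int i) * Q a m" for i
  proof -
    have "Q a m * Q n (int i) = (if 2 ^ a dvd (int i - m) then Q n (int i) else 0)"
      using Q_mult_Q_add[of a m c "int i"] by (simp add: c)
    moreover have "Q n (int i) * Q a m = adj (Q a m * Q n (int i))"
      by (simp add: adj_mult adj_Q)
    ultimately show ?thesis
      by (simp add: mult.assoc adj_Q Q_idem)
  qed
  then show ?thesis
    by (simp add: pinch_def sum_Q flip: sum_distrib_right)
qed

lemma average_Q:
  assumes "a \<le> n"
  shows "average n (Q a m) = (1 / 2 ^ a :: real) *\<^sub>R 1"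
proof -
  obtain d where d: "n = a + d"
    using assms by (metis le_add_diff_inverse)
  have "average n (Q a m) = (1 / 2 ^ n) *\<^sub>R (\<Sum>i<2 ^ (a + d). Q a (m + int i))"
    by (simp add: average_def d U_Q_U add.commute)
  also have "\<dots> = (1 / 2 ^ n * 2 ^ d :: real) *\<^sub>R 1"
    by (simp add: sum_Q_multiple_periods)
  also have "(1 / 2 ^ n * 2 ^ d :: real) = 1 / 2 ^ a"
    by (simp add: d power_add)
  finally show ?thesis .
qed

lemma expect_W_diag_eq_0:
  assumes "m + k \<noteq> 0" "a + nat \<bar>m + k\<bar> \<le> n"
  shows "expect n (W m a a k) = 0"
proof -
  have "int n < 2 ^ n"
    using less_exp[of n] by (metis of_nat_less_iff of_nat_numeral of_nat_power)
  then have "\<bar>m + k\<bar> < 2 ^ n"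
    using assms(2) by linarith
  then have "\<not> 2 ^ n dvd (m + k)"
    using assms(1) zdvd_imp_le[of "2 ^ n" "\<bar>m + k\<bar>"] by auto
  then show ?thesis
    using assms(2) by (simp add: expect_def pinch_W_diag average_def)
qed

lemma expect_W_offdiag_tendsto_0:
  assumes "a \<noteq> b"
  shows "(\<lambda>n. expect n (W m a b k)) \<longlonglongrightarrow> 0"
proof -
  have "\<forall>\<^sub>F n in sequentially. (norm (expect n (W m a b k)))\<^sup>2 \<le> inverse (2 ^ n)"
  proof (cases "b < a")
    case True
    show ?thesis
      using eventually_ge_at_top[of b] by eventually_elim (rule norm_expect_W_offdiag[OF True])
  next
    case False
    show ?thesis
      using eventually_ge_at_top[of a]
    proof eventually_elim
      case (elim n)
      have "adj (expect n (W m a b k)) = expect n (W (- k) b a (- m))"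
        by (simp add: adj_W flip: expect_adj)
      then have "norm (expect n (W m a b k)) = norm (expect n (W (- k) b a (- m)))"
        using norm_adj by metis
      then show ?case
        using norm_expect_W_offdiag[of a b n "- k" "- m"] assms False elim by simp
    qed
  qed
  then have "\<forall>\<^sub>F n in sequentially. norm (expect n (W m a b k)) \<le> sqrt (inverse (2 ^ n))"
    by eventually_elim (rule real_le_rsqrt)
  moreover have "(\<lambda>n. sqrt (inverse (2 ^ n))) \<longlonglongrightarrow> 0"
    using tendsto_real_sqrt[OF LIMSEQ_inverse_realpow_zero[of 2]] by simp
  ultimately show ?thesis
    by (rule Lim_null_comparison)
qed

lemma expect_W_converges: "\<exists>\<gamma>. (\<lambda>n. expect n (W m a b k)) \<longlonglongrightarrow> cscale \<gamma> 1"
proof -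
  consider "a = b" "k = - m" | "a = b" "m + k \<noteq> 0" | "a \<noteq> b"
    by fastforce
  then show ?thesis
  proof cases
    case 1
    then have "W m a b k = Q a m"
      by (simp add: W_def Q_def)
    moreover have "\<forall>\<^sub>F n in sequentially. expect n (Q a m) = (1 / 2 ^ a :: real) *\<^sub>R 1"
      using eventually_ge_at_top[of a] by eventually_elim (simp add: expect_def pinch_Q average_Q)
    ultimately have "\<forall>\<^sub>F n in sequentially. expect n (W m a b k) = (1 / 2 ^ a :: real) *\<^sub>R 1"
      by simp
    then have "(\<lambda>n. expect n (W m a b k)) \<longlonglongrightarrow> cscale (of_real (1 / 2 ^ a)) 1"
      unfolding cscale_of_real by (rule tendsto_eventually)
    then show ?thesis
      by blast
  next
    case 2
    have "\<forall>\<^sub>F n in sequentially. expect n (W m a b k) = cscale 0 1"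
      using eventually_ge_at_top[of "a + nat \<bar>m + k\<bar>"]
      by eventually_elim (simp add: 2 expect_W_diag_eq_0)
    then have "(\<lambda>n. expect n (W m a b k)) \<longlonglongrightarrow> cscale 0 1"
      by (rule tendsto_eventually)
    then show ?thesis
      by blast
  next
    case 3
    then show ?thesis
      using expect_W_offdiag_tendsto_0[of a b m k] by (intro exI[of _ 0]) simp
  qed
qed

lemma expect_converges_on_cspan_words:
  assumes "d \<in> cspan words"
  shows "\<exists>\<gamma>. (\<lambda>n. expect n d) \<longlonglongrightarrow> cscale \<gamma> 1"
proof -
  obtain F c where F: "finite F" "F \<subseteq> words" "d = (\<Sum>v\<in>F. cscale (c v) v)"
    using assms by (rule cspanE)
  have "\<forall>v\<in>F. \<exists>\<gamma>. (\<lambda>n. expect n v) \<longlonglongrightarrow> cscale \<gamma> 1"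
    using F(2) expect_W_converges unfolding words_def by blast
  then obtain g where "\<And>v. v \<in> F \<Longrightarrow> (\<lambda>n. expect n v) \<longlonglongrightarrow> cscale (g v) 1"
    by metis
  then have "(\<lambda>n. \<Sum>v\<in>F. cscale (c v) (expect n v))
      \<longlonglongrightarrow> (\<Sum>v\<in>F. cscale (c v) (cscale (g v) 1))"
    by (intro tendsto_sum bounded_linear.tendsto[OF bounded_linear_cscale])
  moreover have "expect n d = (\<Sum>v\<in>F. cscale (c v) (expect n v))" for n
    by (simp add: F(3) expect_sum expect_cscale)
  ultimately show ?thesis
    by (auto simp: cscale_cscale simp flip: cscale_sum_left)
qed

section \<open>The relative commutant of \<open>\<B>\<^sub>2\<close>\<close>

lemma closure_cspan_words:
  assumes "generates {u, s}"
  shows "closure (cspan words) = UNIV"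
proof -
  have "closed_star_subalgebra (closure (cspan words))"
  proof (rule closed_star_subalgebra_closure_cspan)
    show "1 \<in> cspan words"
      using W_in_words[of 0 0 0 0] by (simp add: W_def cspan_superset)
    show "v * w \<in> cspan words" if "v \<in> words" "w \<in> words" for v w
      using words_mult[OF that] by (auto intro: cspan_zero cspan_superset)
  qed (rule adj_words)
  moreover have "u \<in> words" "s \<in> words"
    using W_in_words[of 1 0 0 0] W_in_words[of 0 1 0 0] by (simp_all add: W_def U_1 S_def)
  ultimately show ?thesis
    using assms closure_subset cspan_superset unfolding generates_def by blast
qed

lemma commutant_trivial:
  assumes "generates {u, s}" "x * u = u * x" "\<And>n j. x * Q n j = Q n j * x"
  shows "\<exists>c. x = cscale c 1"
proof -
  have "x \<in> closure (range (\<lambda>c. cscale c (1::'a)))"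
    unfolding closure_approachable
  proof (intro allI impI)
    fix \<epsilon> :: real assume "0 < \<epsilon>"
    obtain d where d: "d \<in> cspan words" "dist x d < \<epsilon> / 2"
      using closure_cspan_words[OF assms(1)] \<open>0 < \<epsilon>\<close> closure_approachable
      by (metis UNIV_I half_gt_zero dist_commute)
    obtain \<gamma> where "(\<lambda>n. expect n d) \<longlonglongrightarrow> cscale \<gamma> 1"
      using expect_converges_on_cspan_words[OF d(1)] by blast
    then obtain n where n: "norm (expect n d - cscale \<gamma> 1) < \<epsilon> / 2"
      using LIMSEQ_D \<open>0 < \<epsilon>\<close> half_gt_zero by blast
    have "x - cscale \<gamma> 1 = expect n (x - d) + (expect n d - cscale \<gamma> 1)"
      by (simp add: expect_diff expect_fixes_commutant assms(2,3))
    then have "norm (x - cscale \<gamma> 1) \<le> norm (x - d) + norm (expect n d - cscale \<gamma> 1)"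
      by (metis norm_triangle_le norm_expect add_right_mono)
    then have "dist (cscale \<gamma> 1) x < \<epsilon>"
      using n d(2) by (simp add: dist_norm norm_minus_commute)
    then show "\<exists>y\<in>range (\<lambda>c. cscale c (1::'a)). dist y x < \<epsilon>"
      by blast
  qed
  then show ?thesis
    using closed_range_cscale_one closure_closed by blast
qed

lemma W_diag_in_B2: "W m n n k \<in> B2 u s"
  unfolding B2_def closed_cspan_def W_def U_def S_def Sa_def
  by (rule closure_subset[THEN subsetD], rule cspan_superset) blast

lemma Q_in_B2: "Q n j \<in> B2 u s"
  using W_diag_in_B2[of j n "- j"] by (simp add: W_def Q_def)

lemma star_hom_fixing_B2:
  assumes hom: "star_hom \<alpha>" and fixed: "\<And>y. y \<in> B2 u s \<Longrightarrow> \<alpha> y = y"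
  shows "\<alpha> s = s * (adj s * \<alpha> s)" and "adj (adj s * \<alpha> s) * (adj s * \<alpha> s) = 1"
    and "\<And>y. y \<in> B2 u s \<Longrightarrow> s * y * adj s \<in> B2 u s \<Longrightarrow>
      (adj s * \<alpha> s) * y = y * (adj s * \<alpha> s)"
proof -
  define x where "x = adj s * \<alpha> s"
  have mult: "\<alpha> (y * z) = \<alpha> y * \<alpha> z" and adj: "\<alpha> (adj y) = adj (\<alpha> y)" for y z
    using hom by (simp_all add: star_hom_def)
  have "\<alpha> (s * adj s) = s * adj s" "\<alpha> 1 = 1"
    using fixed W_diag_in_B2[of 0 1 0] W_diag_in_B2[of 0 0 0] by (simp_all add: W_def S_def Sa_def)
  then have "s * x = \<alpha> (s * adj s) * \<alpha> s"
    by (simp add: x_def mult.assoc)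
  also have "\<dots> = \<alpha> s"
    by (simp add: mult.assoc adj_s_s flip: mult)
  finally have s_x: "s * x = \<alpha> s" .
  then show "\<alpha> s = s * (adj s * \<alpha> s)"
    by (simp add: x_def)
  have "adj x * x = adj (\<alpha> s) * (s * x)"
    by (simp add: x_def adj_mult adj_adj mult.assoc)
  also have "\<dots> = 1"
    by (simp add: s_x \<open>\<alpha> 1 = 1\<close> adj_s_s flip: adj mult)
  finally have x_isometry: "adj x * x = 1" .
  then show "adj (adj s * \<alpha> s) * (adj s * \<alpha> s) = 1"
    by (simp add: x_def)
  fix y
  assume y: "y \<in> B2 u s" "s * y * adj s \<in> B2 u s"
  have "s * (x * y * adj x) * adj s = s * y * adj s"
    using fixed[OF y(2)] by (simp add: mult adj fixed[OF y(1)] adj_mult mult.assoc flip: s_x)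
  then have "adj s * (s * (x * y * adj x) * adj s) * s = adj s * (s * y * adj s) * s"
    by simp
  then have "x * y * adj x = y"
    by (simp add: mult.assoc adj_s_s) (simp add: adj_s_s flip: mult.assoc)
  then have "x * y = y * x"
    using x_isometry by (metis mult.assoc mult_1_right)
  then show "(adj s * \<alpha> s) * y = y * (adj s * \<alpha> s)"
    by (simp add: x_def)
qed

lemma gauge_if_fixes_B2:
  assumes "generates {u, s}" "star_hom \<alpha>" "\<And>y. y \<in> B2 u s \<Longrightarrow> \<alpha> y = y"
  shows "\<exists>c. cmod c = 1 \<and> is_gauge u s c \<alpha>"
proof -
  define x where "x = adj s * \<alpha> s"
  have x_comm: "x * y = y * x" if "y \<in> B2 u s" "s * y * adj s \<in> B2 u s" for y
    using star_hom_fixing_B2(3)[of \<alpha> y] assms(2,3) that by (simp add: x_def)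
  have u_B2: "u \<in> B2 u s"
    using W_diag_in_B2[of 1 0 0] by (simp add: W_def U_1)
  have "s * u * adj s = W 2 1 1 0"
    using s_mult_U[of 1] by (simp add: W_def U_1 S_def Sa_def)
  then have s_u_adj_s_B2: "s * u * adj s \<in> B2 u s"
    using W_diag_in_B2 by simp
  have "x * u = u * x"
    using x_comm u_B2 s_u_adj_s_B2 by blast
  moreover have "x * Q n j = Q n j * x" for n j
    using x_comm Q_in_B2 by (simp add: s_Q_adj_s)
  ultimately obtain c where c: "x = cscale c 1"
    using commutant_trivial[OF assms(1)] by blast
  have "cmod c = 1"
    using star_hom_fixing_B2(2)[of \<alpha>] assms(2,3)
    by (intro cmod_eq_one_if_unitary_scalar) (simp add: c flip: x_def)
  moreover have "is_gauge u s c \<alpha>"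
    using star_hom_fixing_B2(1)[of \<alpha>] assms(2,3) u_B2
    by (simp add: is_gauge_def c cscale_mult_right flip: x_def)
  ultimately show ?thesis
    by blast
qed

end

theorem proposition4p8:
  fixes u s2 :: "'a::cstar_algebra"
    and \<phi>1 \<phi>2 :: "'a \<Rightarrow> 'a"
  assumes "Q2_relations u s2"
    and "generates {u, s2}"
    and "star_hom \<phi>1"
    and "star_aut \<phi>2"
    and "\<forall>x\<in>B2 u s2. \<phi>1 x = \<phi>2 x"
  shows "\<exists>t. cmod t = 1 \<and> (\<exists>\<alpha>. is_gauge u s2 t \<alpha> \<and> \<phi>1 = \<phi>2 \<circ> \<alpha>)"
proof -
  interpret q2 u s2
    by (rule q2.intro) fact
  have hom2: "star_hom \<phi>2" and bij2: "bij \<phi>2"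
    using assms(4) by (simp_all add: star_aut_def)
  define \<alpha> where "\<alpha> = inv \<phi>2 \<circ> \<phi>1"
  have "star_hom \<alpha>"
    unfolding \<alpha>_def using star_hom_comp star_hom_inv hom2 bij2 assms(3) by blast
  moreover have "\<alpha> y = y" if "y \<in> B2 u s2" for y
    using assms(5) that bij2 by (simp add: \<alpha>_def bij_is_inj)
  ultimately obtain t where "cmod t = 1" "is_gauge u s2 t \<alpha>"
    using gauge_if_fixes_B2[OF assms(2)] by blast
  moreover have "\<phi>1 = \<phi>2 \<circ> \<alpha>"
    by (simp add: \<alpha>_def fun_eq_iff bij2 bij_is_surj surj_f_inv_f)
  ultimately show ?thesis
    by blast
qed

end
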